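(* Let $t_f>0$, let $S\subset\mathbb R^3$ be a finite set of source points and $C$ a finite set of $N_C\ge1$ QBX centers, each $c\in C$ having an expansion radius $r_c>0$ and being owned by a box $b_c$ of an octree with $c\in b_c$. Define $M_C:=\frac1{N_C}\sum_{c\in C}\big|S\cap\{x:|x-c|_\infty\le4\sqrt3\,r_c/t_f\}\big|$. Then the number of pairs $(s,c)\in S\times C$ such that $c$ is suspended in $b_c$ and $s$ lies in the $2$-near neighborhood of $b_c$ is at most $N_CM_C$.
   Context: An octree is a rooted tree of axis-aligned closed cubes ("boxes") in $\mathbb R^3$. For a box $b$, $|b|$ denotes its $\ell^\infty$ radius and $c_b$ its center. The $k$-near neighborhood of $b$ is the closed cube $\{x:|x-c_b|_\infty\le|b|(1+2k)\}$. $\mathsf{TCR}(b)$ is the closed Euclidean ball of radius $\sqrt3|b|(1+t_f)$ centered at $c_b$. A center $c\in b$ with radius $r_c$ is suspended in $b$ if for every one of the eight cubes $b'$ of radius $|b|/2$ obtained by bisecting $b$ along each axis that contains $c$, the closed Euclidean ball $\{x:|x-c|_2\le r_c\}$ is not contained in $\mathsf{TCR}(b')$. *)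

theory Defs
  imports "HOL-Analysis.Analysis"
begin

text \<open>A box (axis-aligned closed cube) in R^3 is represented by its center and its
  l-infinity radius.\<close>
type_synonym box = "(real^3) \<times> real"

definition box_center :: "box \<Rightarrow> real^3" where "box_center b = fst b"
definition box_radius :: "box \<Rightarrow> real" where "box_radius b = snd b"

definition box_set :: "box \<Rightarrow> (real^3) set" where
  "box_set b = {x. infnorm (x - box_center b) \<le> box_radius b}"

definition near_nbhd :: "real \<Rightarrow> box \<Rightarrow> (real^3) set" where
  "near_nbhd k b = {x. infnorm (x - box_center b) \<le> box_radius b * (1 + 2 * k)}"

definition TCR :: "real \<Rightarrow> box \<Rightarrow> (real^3) set" where
  "TCR t_f b = cball (box_center b) (sqrt 3 * box_radius b * (1 + t_f))"

definition children :: "box \<Rightarrow> box set" where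
  "children b = {(box_center b + (box_radius b / 2) *\<^sub>R \<sigma>, box_radius b / 2) | \<sigma>::real^3.
                   \<forall>i. \<sigma> $ i \<in> {-1, 1}}"

definition suspended :: "real \<Rightarrow> real^3 \<Rightarrow> real \<Rightarrow> box \<Rightarrow> bool" where
  "suspended t_f c r_c b \<longleftrightarrow> c \<in> box_set b \<and>
     (\<forall>b'\<in>children b. c \<in> box_set b' \<longrightarrow> \<not> (cball c r_c \<subseteq> TCR t_f b'))"

definition M_C :: "real \<Rightarrow> (real^3) set \<Rightarrow> (real^3) set \<Rightarrow> (real^3 \<Rightarrow> real) \<Rightarrow> real" where
  "M_C t_f S C r = (1 / real (card C)) *
     (\<Sum>c\<in>C. real (card (S \<inter> {x. infnorm (x - c) \<le> 4 * sqrt 3 * r c / t_f})))"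

end

theory Submission
  imports Defs
begin

text \<open>If \<open>r\<^sub>c \<le> \<surd>3 |b| t\<^sub>f / 2\<close>, the ball of radius \<open>r\<^sub>c\<close> around \<open>c\<close> lies in the target
  confinement region of the child of \<open>b\<close> containing \<open>c\<close>; so a suspended center has
  \<open>r\<^sub>c > \<surd>3 |b| t\<^sub>f / 2\<close>. The 2-near neighborhood of \<open>b\<close> lies within \<open>\<ell>\<^sup>\<infinity>\<close>-distance \<open>6|b|\<close>
  of \<open>c\<close>, hence within \<open>4\<surd>3 r\<^sub>c / t\<^sub>f\<close>. Counting the pairs center by center then bounds
  their number by \<open>\<Sum>\<^sub>c |S \<inter> {x. |x - c|\<^sub>\<infinity> \<le> 4\<surd>3 r\<^sub>c / t\<^sub>f}| = N\<^sub>C M\<^sub>C\<close>.\<close>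

lemma infnorm_le_cart: "(\<And>i. \<bar>(x::real^'n) $ i\<bar> \<le> a) \<Longrightarrow> infnorm x \<le> a"
  unfolding infnorm_cart by (rule cSup_least) auto

lemma norm_le_sqrt3_infnorm: "norm (x::real^3) \<le> sqrt 3 * infnorm x"
  using norm_le_infnorm[of x] by simp

lemma child_containing:
  assumes "c \<in> box_set b"
  obtains b' where "b' \<in> children b" "c \<in> box_set b'" "box_radius b' = box_radius b / 2"
proof -
  define R where "R = box_radius b"
  define cb where "cb = box_center b"
  define \<sigma> :: "real^3" where "\<sigma> = (\<chi> i. if cb $ i \<le> c $ i then 1 else -1)"
  define b' where "b' = (cb + (R/2) *\<^sub>R \<sigma>, R/2)"
  have "b' \<in> children b"
    unfolding children_def b'_def R_def cb_def \<sigma>_def by (rule CollectI, rule exI) auto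
  moreover have "infnorm (c - (cb + (R/2) *\<^sub>R \<sigma>)) \<le> R/2"
  proof (rule infnorm_le_cart)
    fix i
    have "\<bar>(c - cb) $ i\<bar> \<le> R"
      using component_le_infnorm_cart[of "c - cb" i] assms
      unfolding box_set_def R_def cb_def by simp
    then show "\<bar>(c - (cb + (R/2) *\<^sub>R \<sigma>)) $ i\<bar> \<le> R/2"
      unfolding \<sigma>_def by (auto simp: abs_if)
  qed
  then have "c \<in> box_set b'"
    unfolding box_set_def b'_def box_center_def box_radius_def by simp
  moreover have "box_radius b' = box_radius b / 2"
    unfolding b'_def R_def box_radius_def by simp
  ultimately show thesis by (rule that)
qed

lemma cball_subset_TCR:
  assumes "c \<in> box_set b" and "r \<le> sqrt 3 * box_radius b * t_f"
  shows "cball c r \<subseteq> TCR t_f b"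
proof
  fix y assume y: "y \<in> cball c r"
  have "dist (box_center b) c = norm (c - box_center b)"
    by (simp add: dist_norm norm_minus_commute)
  also have "\<dots> \<le> sqrt 3 * infnorm (c - box_center b)"
    by (rule norm_le_sqrt3_infnorm)
  also have "\<dots> \<le> sqrt 3 * box_radius b"
    using assms(1) unfolding box_set_def by (simp add: mult_left_mono)
  finally have "dist (box_center b) y \<le> sqrt 3 * box_radius b + r"
    using dist_triangle[of "box_center b" y c] y by simp
  also have "\<dots> \<le> sqrt 3 * box_radius b * (1 + t_f)"
    using assms(2) by (simp add: algebra_simps)
  finally show "y \<in> TCR t_f b" unfolding TCR_def by simp
qed

lemma suspended_radius_gt:
  assumes "suspended t_f c r b"
  shows "sqrt 3 * box_radius b * t_f / 2 < r"
proof (rule ccontr)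
  assume "\<not> ?thesis"
  from assms have "c \<in> box_set b" unfolding suspended_def by simp
  then obtain b' where b': "b' \<in> children b" "c \<in> box_set b'" "box_radius b' = box_radius b / 2"
    by (rule child_containing)
  moreover from \<open>\<not> ?thesis\<close> have "r \<le> sqrt 3 * box_radius b' * t_f"
    by (simp add: b'(3))
  ultimately have "cball c r \<subseteq> TCR t_f b'"
    by (intro cball_subset_TCR) auto
  with assms b' show False unfolding suspended_def by blast
qed

lemma near_nbhd_infnorm_le:
  assumes "c \<in> box_set b" and "x \<in> near_nbhd k b"
  shows "infnorm (x - c) \<le> 2 * (1 + k) * box_radius b"
proof -
  have "infnorm (x - c) \<le> infnorm (x - box_center b) + infnorm (c - box_center b)"
    using infnorm_triangle[of "x - box_center b" "box_center b - c"]
    by (simp add: infnorm_sub[of "box_center b"])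
  also have "\<dots> \<le> box_radius b * (1 + 2 * k) + box_radius b"
    using assms unfolding box_set_def near_nbhd_def by (intro add_mono) auto
  finally show ?thesis by (simp add: algebra_simps)
qed

lemma suspended_near_nbhd_infnorm_le:
  assumes "t_f > 0" and "suspended t_f c r b" and "x \<in> near_nbhd 2 b"
  shows "infnorm (x - c) \<le> 4 * sqrt 3 * r / t_f"
proof -
  have "c \<in> box_set b" using assms(2) unfolding suspended_def by simp
  then have "infnorm (x - c) \<le> 6 * box_radius b"
    using near_nbhd_infnorm_le[OF _ assms(3)] by simp
  also have "6 * box_radius b = 4 * sqrt 3 * (sqrt 3 * box_radius b * t_f / 2) / t_f"
    using assms(1) by (simp add: field_simps)
  also have "\<dots> \<le> 4 * sqrt 3 * r / t_f"
    using suspended_radius_gt[OF assms(2)] assms(1)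
    by (intro divide_right_mono mult_left_mono less_imp_le) auto
  finally show ?thesis .
qed

lemma card_product_filter_eq_sum:
  assumes "finite S" and "finite C"
  shows "card {(s, c) \<in> S \<times> C. P s c} = (\<Sum>c\<in>C. card {s \<in> S. P s c})"
proof -
  have "{(s, c) \<in> S \<times> C. P s c} = prod.swap ` (SIGMA c:C. {s \<in> S. P s c})"
    by force
  then have "card {(s, c) \<in> S \<times> C. P s c} = card (SIGMA c:C. {s \<in> S. P s c})"
    by (simp add: card_image)
  also have "\<dots> = (\<Sum>c\<in>C. card {s \<in> S. P s c})"
    using assms by (simp add: card_SigmaI)
  finally show ?thesis .
qed

theorem mainTheorem5:
  fixes t_f :: real and S C :: "(real^3) set" and r :: "real^3 \<Rightarrow> real"
    and own :: "real^3 \<Rightarrow> box"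
  assumes "t_f > 0"
    and "finite S" and "finite C" and "C \<noteq> {}"
    and "\<forall>c\<in>C. r c > 0"
    and "\<forall>c\<in>C. box_radius (own c) > 0"
    and "\<forall>c\<in>C. c \<in> box_set (own c)"
  shows "real (card {(s, c) \<in> S \<times> C. suspended t_f c (r c) (own c) \<and> s \<in> near_nbhd 2 (own c)})
           \<le> real (card C) * M_C t_f S C r"
proof -
  define T where "T c = S \<inter> {x. infnorm (x - c) \<le> 4 * sqrt 3 * r c / t_f}" for c
  have "card {(s, c) \<in> S \<times> C. suspended t_f c (r c) (own c) \<and> s \<in> near_nbhd 2 (own c)}
      = (\<Sum>c\<in>C. card {s \<in> S. suspended t_f c (r c) (own c) \<and> s \<in> near_nbhd 2 (own c)})"
    using assms(2,3) by (rule card_product_filter_eq_sum)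
  also have "\<dots> \<le> (\<Sum>c\<in>C. card (T c))"
  proof (intro sum_mono card_mono)
    fix c
    show "finite (T c)" using assms(2) unfolding T_def by simp
    show "{s \<in> S. suspended t_f c (r c) (own c) \<and> s \<in> near_nbhd 2 (own c)} \<subseteq> T c"
    proof
      fix s assume "s \<in> {s \<in> S. suspended t_f c (r c) (own c) \<and> s \<in> near_nbhd 2 (own c)}"
      then have "s \<in> S" and susp: "suspended t_f c (r c) (own c)"
        and near: "s \<in> near_nbhd 2 (own c)"
        by auto
      moreover have "infnorm (s - c) \<le> 4 * sqrt 3 * r c / t_f"
        by (rule suspended_near_nbhd_infnorm_le[OF assms(1) susp near])
      ultimately show "s \<in> T c" unfolding T_def by simp
    qed
  qed
  finally have "real (card {(s, c) \<in> S \<times> C. suspended t_f c (r c) (own c) \<and> s \<in> near_nbhd 2 (own c)})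
      \<le> real (\<Sum>c\<in>C. card (T c))"
    by (simp only: of_nat_le_iff)
  also have "\<dots> = real (card C) * M_C t_f S C r"
    unfolding M_C_def T_def using assms(3,4) by simp
  finally show ?thesis .
qed

end
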